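(* Let $\Lambda\subset H^0(\mathbb{P}^r,\mathcal{O}_{\mathbb{P}^r}(2))$ be a linear system of quadrics with $\dim\Lambda=\alpha+1$, let $\Phi:\mathbb{P}^r\dashrightarrow\mathbb{P}^\alpha$ be the associated rational map, and let $X$ be the base scheme of $\Lambda$. A line $L\subset\mathbb{P}^r$ with $L\cap X=\emptyset$ is such that $\Phi_{|L}:L\to\Phi(L)$ is a double covering of a line if and only if $L$ is a secant line (possibly a tangent line) to a non-linear fibre of $\Phi$.
   Context: Over $\mathbb{C}$. The fibre of $\Phi$ through a point $P\in\mathbb{P}^r\setminus X$ means $\overline{\Phi^{-1}(\Phi(P))}$, the Zariski closure; it is non-linear if it is not a linear subspace. Secant lines include tangent lines (limits with the two points coinciding). *)

theory Defs
  imports "HOL-Analysis.Analysis"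
begin

text \<open>P^r is modelled by the nonzero vectors of complex^'n (CARD('n) = r+1),
  a projective point being the complex line (1-dim span) of such a vector; subsets of P^r are
  modelled as cones of nonzero vectors. P^alpha likewise with complex^'m (CARD('m) = alpha+1).\<close>

definition hom_poly :: "nat \<Rightarrow> (complex^'n \<Rightarrow> complex) \<Rightarrow> bool" where
  "hom_poly d f \<longleftrightarrow> (\<exists>S c. finite S \<and> (\<forall>e\<in>S. (\<Sum>i\<in>UNIV. e i) = d) \<and>
      (\<forall>x. f x = (\<Sum>e\<in>S. c e * (\<Prod>i\<in>UNIV. (x $ i) ^ (e i)))))"

definition zariski_closed :: "(complex^'n) set \<Rightarrow> bool" where
  "zariski_closed Z \<longleftrightarrow> (\<exists>F. (\<forall>f\<in>F. \<exists>d. hom_poly d f) \<and>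
      Z = {x. x \<noteq> 0 \<and> (\<forall>f\<in>F. f x = 0)})"

definition zariski_closure :: "(complex^'n) set \<Rightarrow> (complex^'n) set" where
  "zariski_closure S = \<Inter>{Z. zariski_closed Z \<and> S \<subseteq> Z}"

definition proj_line :: "('a::field^'k) set \<Rightarrow> bool" where
  "proj_line W \<longleftrightarrow> vec.subspace W \<and> vec.dim W = 2"

definition linear_cone :: "('a::field^'k) set \<Rightarrow> bool" where
  "linear_cone F \<longleftrightarrow> vec.subspace (insert 0 F)"

text \<open>Secant lines (including tangent lines as limits) to F: L is a limit, in the Grassmannian,
  of lines joining two distinct points of F. Convergence of lines span{p_k,q_k} to span{u,v} is
  expressed by bases a_k, b_k of span{p_k,q_k} converging to a basis u, v of L.\<close>
definition secant_line :: "(complex^'n) set \<Rightarrow> (complex^'n) set \<Rightarrow> bool" where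
  "secant_line F L \<longleftrightarrow> (\<exists>u v p q a b.
      L = vec.span {u, v} \<and> vec.dim L = 2 \<and>
      (\<forall>k::nat. p k \<in> F \<and> q k \<in> F \<and> vec.dim (vec.span {p k, q k}) = 2 \<and>
               a k \<in> vec.span {p k, q k} \<and> b k \<in> vec.span {p k, q k}) \<and>
      a \<longlonglongrightarrow> u \<and> b \<longlonglongrightarrow> v)"

definition Phi :: "('m::finite \<Rightarrow> complex^'n \<Rightarrow> complex) \<Rightarrow> complex^'n \<Rightarrow> complex^'m" where
  "Phi q x = (\<chi> i. q i x)"

definition base_locus :: "('m::finite \<Rightarrow> complex^'n \<Rightarrow> complex) \<Rightarrow> (complex^'n) set" where
  "base_locus q = {x. x \<noteq> 0 \<and> (\<forall>i. q i x = 0)}"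

definition fibre :: "('m::finite \<Rightarrow> complex^'n \<Rightarrow> complex) \<Rightarrow> complex^'n \<Rightarrow> (complex^'n) set" where
  "fibre q P = zariski_closure
      {Q. Q \<noteq> 0 \<and> Q \<notin> base_locus q \<and> vec.span {Phi q Q} = vec.span {Phi q P}}"

text \<open>Phi restricted to the line L (with L disjoint from X) is a double covering of a line:
  the image Phi(L) is a line of P^alpha and all but finitely many points of Phi(L) have
  exactly two preimages in L (finite morphism of degree 2 between curves).\<close>
definition double_cover_of_line ::
  "('m::finite \<Rightarrow> complex^'n \<Rightarrow> complex) \<Rightarrow> (complex^'n) set \<Rightarrow> bool" where
  "double_cover_of_line q L \<longleftrightarrow>
     (let img = {vec.span {Phi q x} | x. x \<in> L \<and> x \<noteq> 0} in
      (\<exists>W. proj_line W \<and> img = {vec.span {y} | y. y \<in> W \<and> y \<noteq> 0}) \<and>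
      finite {y \<in> img. card {vec.span {x} | x. x \<in> L \<and> x \<noteq> 0 \<and> vec.span {Phi q x} = y} \<noteq> 2})"

end

theory Submission
  imports Defs
begin

text \<open>On a line \<open>L = \<langle>u, v\<rangle>\<close> missing the base locus, \<open>\<Phi>(s u + t v) = s\<^sup>2 A + s t B + t\<^sup>2 C\<close>.
  If \<open>L\<close> is a limit of secants \<open>\<langle>p\<^sub>k, p\<^sub>k'\<rangle>\<close> of the fibre through \<open>P\<close>, then on each secant
  \<open>\<Phi>\<close> takes values in a plane \<open>\<langle>\<Phi>(P), B\<^sub>k\<rangle>\<close>, so \<open>A, B, C\<close> are linearly dependent in the
  limit. Then \<open>\<Phi>\<close> maps \<open>L\<close> onto a line by a pair \<open>(F, G)\<close> of binary quadratic forms without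
  common zero, and the fibre over \<open>[\<alpha> : \<beta>]\<close> is the zero set of \<open>\<beta> F - \<alpha> G\<close>: two points,
  except at the zeros of its discriminant, a non-zero quadratic form in \<open>(\<alpha>, \<beta>)\<close>.
  Conversely, if \<open>\<Phi>|\<^sub>L\<close> is a double cover, a generic image point has two preimages
  \<open>x\<^sub>1, x\<^sub>2\<close>; they span \<open>L\<close> and lie in the fibre through \<open>x\<^sub>1\<close>, which cannot be linear,
  for then it would contain \<open>L\<close> and \<open>\<Phi>\<close> would contract \<open>L\<close> to a point.\<close>

section \<open>Pairs of vectors\<close>

lemma span_singleton_eq: "vec.span {x::'a::field^'k} = {c *s x | c. True}"
  by (auto simp: vec.span_singleton)

lemma span_pair_eq: "vec.span {u::'a::field^'k, v} = {s *s u + t *s v | s t. True}"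
proof (intro set_eqI iffI)
  fix x assume "x \<in> vec.span {u, v}"
  then obtain s where "x - s *s u \<in> vec.span {v}" using vec.span_breakdown_eq by blast
  then obtain t where "x - s *s u = t *s v" by (auto simp: span_singleton_eq)
  then have "x = s *s u + t *s v" by (simp add: algebra_simps)
  then show "x \<in> {s *s u + t *s v | s t. True}" by blast
next
  fix x assume "x \<in> {s *s u + t *s v | s t. True}"
  then obtain s t where "x = s *s u + t *s v" by blast
  then show "x \<in> vec.span {u, v}"
    by (simp add: vec.span_add vec.span_scale vec.span_base)
qed

lemma span_pair_nonzero_cases:
  assumes "y \<in> vec.span {e1, e2}" "y \<noteq> 0"
  obtains \<alpha> \<beta> where "y = \<alpha> *s e1 + \<beta> *s e2" "(\<alpha>, \<beta>) \<noteq> (0, 0)"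
proof -
  obtain \<alpha> \<beta> where y: "y = \<alpha> *s e1 + \<beta> *s e2" using assms(1) unfolding span_pair_eq by blast
  moreover have "(\<alpha>, \<beta>) \<noteq> (0, 0)" using assms(2) y by auto
  ultimately show ?thesis by (rule that)
qed

lemma span_singleton_eq_iff:
  "vec.span {x::'a::field^'k} = vec.span {y} \<longleftrightarrow> (\<exists>c. c \<noteq> 0 \<and> x = c *s y)"
proof
  assume eq: "vec.span {x} = vec.span {y}"
  have "x \<in> vec.span {y}" using vec.span_base[of x "{x}"] unfolding eq by simp
  then obtain c where c: "x = c *s y" by (auto simp: span_singleton_eq)
  show "\<exists>c. c \<noteq> 0 \<and> x = c *s y"
  proof (cases "c = 0")
    case True
    then have "vec.span {y} = {0}" using eq c by (simp add: span_singleton_eq)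
    then have "y = 0" using vec.span_base[of y "{y}"] by blast
    then show ?thesis using c by (intro exI[of _ 1]) simp
  qed (use c in blast)
next
  assume "\<exists>c. c \<noteq> 0 \<and> x = c *s y"
  then obtain c where "c \<noteq> 0" "x = c *s y" by blast
  then have "x \<in> vec.span {y}" "y \<in> vec.span {x}"
    by (auto simp: span_singleton_eq intro!: exI[of _ "inverse c"])
  then show "vec.span {x} = vec.span {y}" by (simp add: vec.span_eq)
qed

text \<open>Unlike \<open>vec.independent {x, y}\<close>, this fails for \<open>x = y\<close>.\<close>
definition indep2 :: "'a::field^'k \<Rightarrow> 'a^'k \<Rightarrow> bool" where
  "indep2 x y \<longleftrightarrow> (\<forall>a b. a *s x + b *s y = 0 \<longrightarrow> a = 0 \<and> b = 0)"

lemma indep2_lincomb_eq_0_iff: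
  "indep2 x y \<Longrightarrow> a *s x + b *s y = 0 \<longleftrightarrow> (a, b) = (0, 0)"
  unfolding indep2_def by auto

lemma indep2_iff_not_multiple: "indep2 x y \<longleftrightarrow> x \<noteq> 0 \<and> (\<forall>c. y \<noteq> c *s x)"
proof
  assume ind: "indep2 x y"
  have "x \<noteq> 0" using indep2_lincomb_eq_0_iff[OF ind, of 1 0] by auto
  moreover have "y \<noteq> c *s x" for c
  proof
    assume y: "y = c *s x"
    have "c *s x + (-1) *s y = 0" unfolding y by (simp add: vec_eq_iff)
    with indep2_lincomb_eq_0_iff[OF ind, of c "-1"] show False by simp
  qed
  ultimately show "x \<noteq> 0 \<and> (\<forall>c. y \<noteq> c *s x)" by blast
next
  assume x: "x \<noteq> 0 \<and> (\<forall>c. y \<noteq> c *s x)"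
  show "indep2 x y" unfolding indep2_def
  proof (intro allI impI)
    fix a b assume ab: "a *s x + b *s y = 0"
    have "b = 0"
    proof (rule ccontr)
      assume "b \<noteq> 0"
      then have "y = (- a / b) *s x" using ab by (simp add: vec_eq_iff field_simps add_eq_0_iff2)
      then show False using x by blast
    qed
    then show "a = 0 \<and> b = 0" using ab x by (simp add: vec.scale_eq_0_iff)
  qed
qed

lemma indep2_iff_dim_span: "indep2 x y \<longleftrightarrow> vec.dim (vec.span {x::'a::field^'k, y}) = 2"
proof
  assume ind: "indep2 x y"
  then have "x \<noteq> 0" "y \<notin> vec.span {x}"
    by (auto simp: indep2_iff_not_multiple span_singleton_eq)
  moreover have "x \<noteq> y" using ind by (auto simp: indep2_iff_not_multiple dest: spec[of _ 1])
  ultimately have "vec.independent {y, x}" by (simp add: vec.independent_insert)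
  then show "vec.dim (vec.span {x, y}) = 2"
    using \<open>x \<noteq> y\<close> by (simp add: vec.dim_eq_card_independent insert_commute)
next
  assume dim: "vec.dim (vec.span {x, y}) = 2"
  show "indep2 x y"
  proof (rule ccontr)
    assume "\<not> indep2 x y"
    then consider "x = 0" | c where "y = c *s x" by (auto simp: indep2_iff_not_multiple)
    then obtain z where "vec.span {x, y} = vec.span {z}"
    proof cases
      case 1 then show ?thesis using that[of y] by (simp add: vec.span_insert_0)
    next
      case 2
      then have "y \<in> vec.span {x}" by (auto simp: span_singleton_eq)
      then show ?thesis using that[of x] vec.span_redundant[of y "{x}"] by (simp add: insert_commute)
    qed
    then have "vec.dim (vec.span {x, y}) \<le> 1"
      using vec.dim_le_card'[of "{z}"] by (simp add: vec.dim_span)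
    then show False using dim by simp
  qed
qed

lemma indep2_if_span_singleton_neq:
  assumes "x \<noteq> 0" "y \<noteq> 0" "vec.span {x} \<noteq> vec.span {y}"
  shows "indep2 x y"
  unfolding indep2_iff_not_multiple
proof (intro conjI allI notI)
  fix c assume y: "y = c *s x"
  then have "c \<noteq> 0" using assms(2) by auto
  then show False using assms(3) y span_singleton_eq_iff by blast
qed (use assms(1) in simp)

lemma indep2_coords_eq:
  assumes "indep2 e1 e2" "F *s e1 + G *s e2 = F' *s e1 + G' *s e2"
  shows "F = F' \<and> G = G'"
proof -
  have "(F - F') *s e1 + (G - G') *s e2 = 0" using assms(2) by (simp add: vec_eq_iff algebra_simps)
  then have "(F - F', G - G') = (0, 0)" by (rule iffD1[OF indep2_lincomb_eq_0_iff[OF assms(1)]])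
  then show ?thesis by simp
qed

lemma indep2_span_singleton_eq_iff:
  assumes ind: "indep2 e1 e2" and FG: "(F, G) \<noteq> (0, 0)" and \<alpha>\<beta>: "(\<alpha>, \<beta>) \<noteq> (0, 0)"
  shows "vec.span {F *s e1 + G *s e2} = vec.span {\<alpha> *s e1 + \<beta> *s e2} \<longleftrightarrow> \<beta> * F = \<alpha> * G"
proof -
  have "F *s e1 + G *s e2 = c *s (\<alpha> *s e1 + \<beta> *s e2) \<longleftrightarrow> F = c * \<alpha> \<and> G = c * \<beta>" for c
    using indep2_coords_eq[OF ind, of F G "c * \<alpha>" "c * \<beta>"] by (auto simp: vec_eq_iff algebra_simps)
  moreover have "(\<exists>c. c \<noteq> 0 \<and> F = c * \<alpha> \<and> G = c * \<beta>) \<longleftrightarrow> \<beta> * F = \<alpha> * G"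
  proof
    assume "\<beta> * F = \<alpha> * G"
    then have "F = (if \<alpha> = 0 then G / \<beta> else F / \<alpha>) * \<alpha> \<and> G = (if \<alpha> = 0 then G / \<beta> else F / \<alpha>) * \<beta>"
      using \<alpha>\<beta> by (auto simp: field_simps)
    moreover have "(if \<alpha> = 0 then G / \<beta> else F / \<alpha>) \<noteq> 0" using calculation FG by auto
    ultimately show "\<exists>c. c \<noteq> 0 \<and> F = c * \<alpha> \<and> G = c * \<beta>" by blast
  qed auto
  ultimately show ?thesis by (simp add: span_singleton_eq_iff)
qed

lemma indep2_span_zero_of_linear_form:
  assumes ind: "indep2 e1 e2" and "(p, r) \<noteq> (0, 0)" "(s, t) \<noteq> (0, 0)" "p * s + r * t = 0"
  shows "vec.span {s *s e1 + t *s e2} = vec.span {r *s e1 + (- p) *s e2}"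
  using assms by (subst indep2_span_singleton_eq_iff) (auto simp: algebra_simps add_eq_0_iff2)

lemma tendsto_vec_scale:
  fixes X :: "'b \<Rightarrow> 'a::real_normed_field^'k"
  assumes "(a \<longlongrightarrow> c) F" "(X \<longlongrightarrow> x) F"
  shows "((\<lambda>k. a k *s X k) \<longlongrightarrow> c *s x) F"
proof -
  have "((\<lambda>k. \<chi> i. a k * X k $ i) \<longlongrightarrow> c *s x) F"
    unfolding vector_scalar_mult_def by (intro tendsto_vec_lambda tendsto_mult assms tendsto_vec_nth)
  then show ?thesis by (simp add: vector_scalar_mult_def)
qed

section \<open>Homogeneous polynomials\<close>

lemma hom_poly_scale:
  assumes "hom_poly d f" shows "f (c *s x) = c ^ d * f x"
proof -
  obtain S a where S: "\<forall>e\<in>S. (\<Sum>i\<in>UNIV. e i) = d"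
    and f: "\<And>x. f x = (\<Sum>e\<in>S. a e * (\<Prod>i\<in>UNIV. (x $ i) ^ e i))"
    using assms unfolding hom_poly_def by blast
  have "(\<Prod>i\<in>UNIV. ((c *s x) $ i) ^ e i) = c ^ d * (\<Prod>i\<in>UNIV. (x $ i) ^ e i)" if "e \<in> S" for e
  proof -
    have "(\<Prod>i\<in>UNIV. ((c *s x) $ i) ^ e i) = (\<Prod>i\<in>UNIV. c ^ e i) * (\<Prod>i\<in>UNIV. (x $ i) ^ e i)"
      by (simp add: power_mult_distrib prod.distrib)
    also have "(\<Prod>i\<in>UNIV. c ^ e i) = c ^ (\<Sum>i\<in>UNIV. e i)" by (simp add: power_sum)
    finally show ?thesis using S that by simp
  qed
  then show ?thesis by (simp add: f sum_distrib_left algebra_simps cong: sum.cong)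
qed

lemma hom_poly_lincomb:
  assumes "hom_poly d f" "hom_poly d g" shows "hom_poly d (\<lambda>x. a * f x + b * g x)"
proof -
  obtain S1 c1 where S1: "finite S1" "\<forall>e\<in>S1. (\<Sum>i\<in>UNIV. e i) = d"
    and f: "\<And>x. f x = (\<Sum>e\<in>S1. c1 e * (\<Prod>i\<in>UNIV. (x $ i) ^ e i))"
    using assms(1) unfolding hom_poly_def by blast
  obtain S2 c2 where S2: "finite S2" "\<forall>e\<in>S2. (\<Sum>i\<in>UNIV. e i) = d"
    and g: "\<And>x. g x = (\<Sum>e\<in>S2. c2 e * (\<Prod>i\<in>UNIV. (x $ i) ^ e i))"
    using assms(2) unfolding hom_poly_def by blast
  define c where "c e = (if e \<in> S1 then a * c1 e else 0) + (if e \<in> S2 then b * c2 e else 0)" for e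
  have "a * f x + b * g x = (\<Sum>e\<in>S1 \<union> S2. c e * (\<Prod>i\<in>UNIV. (x $ i) ^ e i))" for x
  proof -
    let ?m = "\<lambda>e. \<Prod>i\<in>UNIV. (x $ i) ^ e i"
    have "(\<Sum>e\<in>S1 \<union> S2. c e * ?m e) = (\<Sum>e\<in>S1 \<union> S2. if e \<in> S1 then a * c1 e * ?m e else 0)
        + (\<Sum>e\<in>S1 \<union> S2. if e \<in> S2 then b * c2 e * ?m e else 0)"
      unfolding sum.distrib[symmetric] by (rule sum.cong) (auto simp: c_def distrib_right)
    also have "\<dots> = (\<Sum>e\<in>S1. a * c1 e * ?m e) + (\<Sum>e\<in>S2. b * c2 e * ?m e)"
      using S1(1) S2(1) by (simp add: sum.If_cases Int_absorb1 Int_absorb2)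
    finally show ?thesis by (simp add: f g sum_distrib_left mult.assoc)
  qed
  then show ?thesis unfolding hom_poly_def using S1 S2 by (intro exI[of _ "S1 \<union> S2"] exI[of _ c]) auto
qed

lemma hom_poly_isCont:
  assumes "hom_poly d f" shows "isCont f x"
proof -
  obtain S c where "\<And>x. f x = (\<Sum>e\<in>S. c e * (\<Prod>i\<in>UNIV. (x $ i) ^ e i))"
    using assms unfolding hom_poly_def by blast
  then have "f = (\<lambda>x. \<Sum>e\<in>S. c e * (\<Prod>i\<in>UNIV. (x $ i) ^ e i))" by blast
  then show ?thesis by (simp add: continuous_intros)
qed

lemma hom_poly_on_line:
  fixes f :: "complex^'n \<Rightarrow> complex"
  assumes "hom_poly d f"
  obtains p where "degree p \<le> d" "\<And>z. f (x + z *s y) = poly p z"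
proof -
  obtain S c where S: "finite S" "\<forall>e\<in>S. (\<Sum>i\<in>UNIV. e i) = d"
    and f: "\<And>x. f x = (\<Sum>e\<in>S. c e * (\<Prod>i\<in>UNIV. (x $ i) ^ e i))"
    using assms unfolding hom_poly_def by blast
  define p where "p = (\<Sum>e\<in>S. smult (c e) (\<Prod>i\<in>UNIV. [:x $ i, y $ i:] ^ e i))"
  have "degree p \<le> d" unfolding p_def
  proof (rule degree_sum_le[OF S(1)])
    fix e assume e: "e \<in> S"
    have "degree (\<Prod>i\<in>UNIV. [:x $ i, y $ i:] ^ e i) \<le> (\<Sum>i\<in>UNIV. degree ([:x $ i, y $ i:] ^ e i))"
      using degree_prod_sum_le[of UNIV "\<lambda>i. [:x $ i, y $ i:] ^ e i"] by (simp add: o_def)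
    also have "\<dots> \<le> (\<Sum>i\<in>UNIV. e i)"
      by (intro sum_mono order.trans[OF degree_power_le]) simp
    finally show "degree (smult (c e) (\<Prod>i\<in>UNIV. [:x $ i, y $ i:] ^ e i)) \<le> d"
      using S(2) e degree_smult_le order_trans by metis
  qed
  moreover have "f (x + z *s y) = poly p z" for z
    unfolding p_def by (simp add: f poly_sum poly_prod algebra_simps)
  ultimately show ?thesis using that by blast
qed

lemma poly_degree_le_2:
  fixes p :: "'a::comm_semiring_1 poly"
  assumes "degree p \<le> 2"
  shows "poly p z = coeff p 0 + coeff p 1 * z + coeff p 2 * z^2"
proof -
  have "poly p z = (\<Sum>i\<le>degree p. coeff p i * z ^ i)" by (rule poly_altdef)
  also have "\<dots> = (\<Sum>i\<le>2. coeff p i * z ^ i)"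
    by (rule sum.mono_neutral_left) (use assms in \<open>auto simp: coeff_eq_0\<close>)
  finally show ?thesis by (simp add: eval_nat_numeral atMost_Suc algebra_simps)
qed

text \<open>For \<open>s \<noteq> 0\<close> the expansion follows from homogeneity, and it extends to \<open>s = 0\<close> by continuity.\<close>
lemma hom_poly_2_on_pair:
  fixes f :: "complex^'n \<Rightarrow> complex"
  assumes f: "hom_poly 2 f"
  shows "f (s *s u + t *s v) = s^2 * f u + s * t * (f (u + v) - f u - f v) + t^2 * f v"
proof -
  obtain p where p: "degree p \<le> 2" "\<And>z. f (u + z *s v) = poly p z"
    using hom_poly_on_line[OF f] by blast
  define g where "g s t = coeff p 0 * s^2 + coeff p 1 * s * t + coeff p 2 * t^2" for s t
  have nonzero: "f (s *s u + t *s v) = g s t" if "s \<noteq> 0" for s t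
  proof -
    have "s *s u + t *s v = s *s (u + (t / s) *s v)" using that by (simp add: vec_eq_iff algebra_simps)
    then have "f (s *s u + t *s v) = s^2 * poly p (t / s)" by (simp only: hom_poly_scale[OF f] p(2))
    also have "\<dots> = g s t"
      using that by (simp add: poly_degree_le_2[OF p(1)] g_def field_simps power2_eq_square)
    finally show ?thesis .
  qed
  have all: "f (s *s u + t *s v) = g s t" for s t
  proof -
    have "((\<lambda>s. s *s u + t *s v) \<longlongrightarrow> 0 *s u + t *s v) (at 0)"
      by (intro tendsto_add tendsto_vec_scale tendsto_ident_at tendsto_const)
    then have "((\<lambda>s. f (s *s u + t *s v)) \<longlongrightarrow> f (0 *s u + t *s v)) (at 0)"
      by (rule isCont_tendsto_compose[OF hom_poly_isCont[OF f]])
    moreover have "((\<lambda>s. f (s *s u + t *s v)) \<longlongrightarrow> g 0 t) (at 0)"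
    proof (subst tendsto_cong)
      show "\<forall>\<^sub>F s in at 0. f (s *s u + t *s v) = g s t"
        by (auto simp: eventually_at_filter nonzero)
      show "((\<lambda>s. g s t) \<longlongrightarrow> g 0 t) (at 0)" unfolding g_def by (intro tendsto_eq_intros) auto
    qed
    ultimately have "f (0 *s u + t *s v) = g 0 t" by (rule tendsto_unique[OF at_neq_bot])
    then show ?thesis by (cases "s = 0") (simp_all add: nonzero)
  qed
  show ?thesis using all[of s t] all[of 1 0] all[of 0 1] all[of 1 1] by (simp add: g_def)
qed

section \<open>Binary quadratic forms\<close>

abbreviation bin_quad :: "'a::comm_ring_1 \<Rightarrow> 'a \<Rightarrow> 'a \<Rightarrow> 'a \<Rightarrow> 'a \<Rightarrow> 'a" where
  "bin_quad a b c s t \<equiv> a * s^2 + b * s * t + c * t^2"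

lemma bin_quad_factor:
  fixes h0 h1 h2 :: complex
  assumes "(h0, h1, h2) \<noteq> (0, 0, 0)"
  obtains p1 r1 p2 r2 where "(p1, r1) \<noteq> (0, 0)" "(p2, r2) \<noteq> (0, 0)"
    "\<forall>s t. bin_quad h0 h1 h2 s t = (p1 * s + r1 * t) * (p2 * s + r2 * t)"
    "h1^2 - 4 * h0 * h2 \<noteq> 0 \<longrightarrow> p1 * r2 - p2 * r1 \<noteq> 0"
proof (cases "h0 = 0")
  case True
  then show ?thesis using assms
    by (intro that[of 0 1 h1 h2]) (auto simp: algebra_simps power2_eq_square)
next
  case False
  define \<delta> where "\<delta> = csqrt (h1^2 - 4 * h0 * h2)"
  have \<delta>: "\<delta>^2 = h1^2 - 4 * h0 * h2" unfolding \<delta>_def by simp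
  have factor: "bin_quad h0 h1 h2 s t = (1 / 2 * s + (h1 - \<delta>) / (4 * h0) * t) * (2 * h0 * s + (h1 + \<delta>) * t)"
    for s t
  proof -
    have "(2 * h0 * s + (h1 - \<delta>) * t) * (2 * h0 * s + (h1 + \<delta>) * t)
        = 4 * h0 * (h0 * s^2 + h1 * s * t) + (h1^2 - \<delta>^2) * t^2"
      by (simp add: algebra_simps power2_eq_square)
    also have "\<dots> = 4 * h0 * bin_quad h0 h1 h2 s t" unfolding \<delta> by (simp add: algebra_simps)
    finally show ?thesis using False by (simp add: field_simps)
  qed
  have "1 / 2 * (h1 + \<delta>) - 2 * h0 * ((h1 - \<delta>) / (4 * h0)) = \<delta>" using False by (simp add: field_simps)
  moreover have "\<delta> \<noteq> 0" if "h1^2 - 4 * h0 * h2 \<noteq> 0" using \<delta> that by auto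
  ultimately show ?thesis using False factor
    by (intro that[of "1 / 2" "(h1 - \<delta>) / (4 * h0)" "2 * h0" "h1 + \<delta>"]) auto
qed

lemma bin_quad_has_zero:
  fixes h0 h1 h2 :: complex
  obtains s t where "(s, t) \<noteq> (0, 0)" "bin_quad h0 h1 h2 s t = 0"
proof (cases "(h0, h1, h2) = (0, 0, 0)")
  case True
  then show ?thesis by (intro that[of 1 0]) simp_all
next
  case False
  obtain p1 r1 p2 r2 where "(p1, r1) \<noteq> (0, 0)" "(p2, r2) \<noteq> (0, 0)"
    and factor: "\<forall>s t. bin_quad h0 h1 h2 s t = (p1 * s + r1 * t) * (p2 * s + r2 * t)"
    and "h1^2 - 4 * h0 * h2 \<noteq> 0 \<longrightarrow> p1 * r2 - p2 * r1 \<noteq> 0"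
    by (rule bin_quad_factor[OF False])
  show ?thesis
  proof (rule that)
    show "(r1, - p1) \<noteq> (0, 0)" using \<open>(p1, r1) \<noteq> (0, 0)\<close> by auto
    show "bin_quad h0 h1 h2 r1 (- p1) = 0" using factor[rule_format, of r1 "- p1"] by simp
  qed
qed

definition quad_zeros :: "complex^'k \<Rightarrow> complex^'k \<Rightarrow> complex \<Rightarrow> complex \<Rightarrow> complex \<Rightarrow> (complex^'k) set set" where
  "quad_zeros u v a b c = {vec.span {s *s u + t *s v} | s t. (s, t) \<noteq> (0, 0) \<and> bin_quad a b c s t = 0}"

lemma quad_zerosI:
  "(s, t) \<noteq> (0, 0) \<Longrightarrow> bin_quad a b c s t = 0 \<Longrightarrow> vec.span {s *s u + t *s v} \<in> quad_zeros u v a b c"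
  unfolding quad_zeros_def by blast

lemma quad_zeros_eq_pair:
  assumes ind: "indep2 u v" and h: "(h0, h1, h2) \<noteq> (0, 0, 0)"
  obtains w1 w2 where "quad_zeros u v h0 h1 h2 = {vec.span {w1}, vec.span {w2}}"
    "h1^2 - 4 * h0 * h2 \<noteq> 0 \<longrightarrow> vec.span {w1} \<noteq> vec.span {w2}"
proof -
  obtain p1 r1 p2 r2 where f: "(p1, r1) \<noteq> (0, 0)" "(p2, r2) \<noteq> (0, 0)"
    "\<forall>s t. bin_quad h0 h1 h2 s t = (p1 * s + r1 * t) * (p2 * s + r2 * t)"
    "h1^2 - 4 * h0 * h2 \<noteq> 0 \<longrightarrow> p1 * r2 - p2 * r1 \<noteq> 0"
    by (rule bin_quad_factor[OF h])
  define w1 where "w1 = r1 *s u + (- p1) *s v"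
  define w2 where "w2 = r2 *s u + (- p2) *s v"
  have "quad_zeros u v h0 h1 h2 = {vec.span {w1}, vec.span {w2}}"
  proof (intro equalityI subsetI)
    fix Z assume "Z \<in> quad_zeros u v h0 h1 h2"
    then obtain s t where st: "Z = vec.span {s *s u + t *s v}" "(s, t) \<noteq> (0, 0)"
      "p1 * s + r1 * t = 0 \<or> p2 * s + r2 * t = 0"
      unfolding quad_zeros_def f(3)[rule_format] by auto
    from st(3) show "Z \<in> {vec.span {w1}, vec.span {w2}}"
    proof
      assume "p1 * s + r1 * t = 0"
      then have "Z = vec.span {w1}"
        unfolding st(1) w1_def by (rule indep2_span_zero_of_linear_form[OF ind f(1) st(2)])
      then show ?thesis by simp
    next
      assume "p2 * s + r2 * t = 0"
      then have "Z = vec.span {w2}"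
        unfolding st(1) w2_def by (rule indep2_span_zero_of_linear_form[OF ind f(2) st(2)])
      then show ?thesis by simp
    qed
  next
    have "bin_quad h0 h1 h2 r1 (- p1) = 0" "bin_quad h0 h1 h2 r2 (- p2) = 0"
      unfolding f(3)[rule_format] by (simp_all add: algebra_simps)
    moreover have "(r1, - p1) \<noteq> (0, 0)" "(r2, - p2) \<noteq> (0, 0)" using f(1,2) by auto
    ultimately have "vec.span {w1} \<in> quad_zeros u v h0 h1 h2" "vec.span {w2} \<in> quad_zeros u v h0 h1 h2"
      unfolding w1_def w2_def by (blast intro: quad_zerosI)+
    then show "Z \<in> quad_zeros u v h0 h1 h2" if "Z \<in> {vec.span {w1}, vec.span {w2}}" for Z
      using that by blast
  qed
  moreover have "vec.span {w1} \<noteq> vec.span {w2}" if "h1^2 - 4 * h0 * h2 \<noteq> 0"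
  proof -
    have "vec.span {w1} = vec.span {w2} \<longleftrightarrow> (- p2) * r1 = r2 * (- p1)"
      unfolding w1_def w2_def by (rule indep2_span_singleton_eq_iff[OF ind]) (use f(1,2) in auto)
    then show ?thesis using f(4)[rule_format, OF that] by (simp add: algebra_simps)
  qed
  ultimately show ?thesis using that by blast
qed

lemma finite_quad_zeros:
  assumes "indep2 u v" "(h0, h1, h2) \<noteq> (0, 0, 0)"
  shows "finite (quad_zeros u v h0 h1 h2)"
proof -
  obtain w1 w2 where "quad_zeros u v h0 h1 h2 = {vec.span {w1}, vec.span {w2}}"
    and "h1^2 - 4 * h0 * h2 \<noteq> 0 \<longrightarrow> vec.span {w1} \<noteq> vec.span {w2}"
    by (rule quad_zeros_eq_pair[OF assms])
  then show ?thesis by simp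
qed

lemma card_quad_zeros:
  assumes "indep2 u v" and disc: "h1^2 - 4 * h0 * h2 \<noteq> 0"
  shows "card (quad_zeros u v h0 h1 h2) = 2"
proof -
  have "(h0, h1, h2) \<noteq> (0, 0, 0)" using disc by auto
  then obtain w1 w2 where "quad_zeros u v h0 h1 h2 = {vec.span {w1}, vec.span {w2}}"
    and "h1^2 - 4 * h0 * h2 \<noteq> 0 \<longrightarrow> vec.span {w1} \<noteq> vec.span {w2}"
    by (rule quad_zeros_eq_pair[OF assms(1)])
  then show ?thesis using disc by simp
qed

lemma pencil_discriminant:
  fixes a1 b1 c1 a2 b2 c2 \<alpha> \<beta> :: "'a::comm_ring_1"
  shows "(\<beta> * b1 - \<alpha> * b2)^2 - 4 * (\<beta> * a1 - \<alpha> * a2) * (\<beta> * c1 - \<alpha> * c2)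
    = bin_quad (b2^2 - 4 * a2 * c2) (4 * (a1 * c2 + a2 * c1) - 2 * b1 * b2) (b1^2 - 4 * a1 * c1) \<alpha> \<beta>"
  by (simp add: algebra_simps power2_eq_square)

text \<open>The triple is the coefficient vector of the discriminant of
  \<open>\<beta> (a1, b1, c1) - \<alpha> (a2, b2, c2)\<close> as a quadratic form in \<open>(\<alpha>, \<beta>)\<close>.\<close>
lemma pencil_discriminant_nonzero:
  fixes a1 b1 c1 a2 b2 c2 :: complex
  assumes no_common_zero: "\<And>s t. (s, t) \<noteq> (0, 0) \<Longrightarrow> bin_quad a1 b1 c1 s t \<noteq> 0 \<or> bin_quad a2 b2 c2 s t \<noteq> 0"
  shows "(b2^2 - 4 * a2 * c2, 4 * (a1 * c2 + a2 * c1) - 2 * b1 * b2, b1^2 - 4 * a1 * c1) \<noteq> (0, 0, 0)"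
proof
  assume "(b2^2 - 4 * a2 * c2, 4 * (a1 * c2 + a2 * c1) - 2 * b1 * b2, b1^2 - 4 * a1 * c1) = (0, 0, 0)"
  then have e2: "4 * (a1 * c2 + a2 * c1) = 2 * b1 * b2" and e3: "b1^2 = 4 * a1 * c1"
    by simp_all
  show False
  proof (cases "a1 = 0")
    case False
    have "bin_quad a1 b1 c1 (- b1) (2 * a1) = a1 * (4 * a1 * c1 - b1^2)"
      by (simp add: algebra_simps power2_eq_square)
    moreover have "bin_quad a2 b2 c2 (- b1) (2 * a1) = a2 * b1^2 - a1 * (2 * b1 * b2) + 4 * a1^2 * c2"
      by (simp add: algebra_simps power2_eq_square)
    ultimately have "bin_quad a1 b1 c1 (- b1) (2 * a1) = 0" "bin_quad a2 b2 c2 (- b1) (2 * a1) = 0"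
      unfolding e3 e2[symmetric] by (simp_all add: algebra_simps power2_eq_square)
    then show False using no_common_zero[of "- b1" "2 * a1"] False by simp
  next
    case True
    then have "b1 = 0" using e3 by simp
    show False
    proof (cases "c1 = 0")
      case False
      then have "a2 = 0" using e2 True \<open>b1 = 0\<close> by simp
      then show False using no_common_zero[of 1 0] True by simp
    next
      case c1: True
      obtain s t where "(s, t) \<noteq> (0, 0)" "bin_quad a2 b2 c2 s t = 0" by (rule bin_quad_has_zero)
      then show False using no_common_zero[of s t] True \<open>b1 = 0\<close> c1 by simp
    qed
  qed
qed

section \<open>Dependent triples of vectors\<close>

definition dependent3 :: "'a::field^'k \<Rightarrow> 'a^'k \<Rightarrow> 'a^'k \<Rightarrow> bool" where
  "dependent3 x y z \<longleftrightarrow> (\<exists>a b c. (a, b, c) \<noteq> (0, 0, 0) \<and> a *s x + b *s y + c *s z = 0)"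

lemma homogeneous_2x3_nontrivial_solution:
  fixes x1 x2 y1 y2 z1 z2 :: "'a::field"
  obtains a b c where "(a, b, c) \<noteq> (0, 0, 0)" "a * x1 + b * y1 + c * z1 = 0" "a * x2 + b * y2 + c * z2 = 0"
proof (cases "x1 * y2 - x2 * y1 = 0")
  case False
  then show ?thesis
    by (intro that[of "y1 * z2 - y2 * z1" "z1 * x2 - z2 * x1" "x1 * y2 - x2 * y1"]) (simp_all add: algebra_simps)
next
  case True
  consider "x1 \<noteq> 0" | "x1 = 0" "x2 \<noteq> 0" | "x1 = 0" "x2 = 0" by blast
  then show ?thesis
  proof cases
    case 1
    then show ?thesis using True by (intro that[of "- y1" x1 0]) (simp_all add: algebra_simps)
  next
    case 2
    then show ?thesis using True by (intro that[of "- y2" x2 0]) (simp_all add: algebra_simps)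
  next
    case 3
    then show ?thesis by (intro that[of 1 0 0]) simp_all
  qed
qed

lemma dependent3_in_span_pair:
  assumes "x = x1 *s w1 + x2 *s w2" "y = y1 *s w1 + y2 *s w2" "z = z1 *s w1 + z2 *s w2"
  shows "dependent3 x y z"
proof -
  obtain a b c where abc: "(a, b, c) \<noteq> (0, 0, 0)" "a * x1 + b * y1 + c * z1 = 0" "a * x2 + b * y2 + c * z2 = 0"
    by (rule homogeneous_2x3_nontrivial_solution)
  have "a *s x + b *s y + c *s z = (a * x1 + b * y1 + c * z1) *s w1 + (a * x2 + b * y2 + c * z2) *s w2"
    unfolding assms by (simp add: vec_eq_iff algebra_simps)
  then show ?thesis unfolding dependent3_def abc(2,3) using abc(1) by auto
qed

text \<open>Normalise the coefficient triples to the unit sphere and pass to a convergent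
  subsequence.\<close>
lemma dependent3_limit:
  fixes X Y Z :: "nat \<Rightarrow> complex^'k"
  assumes dep: "\<And>k. dependent3 (X k) (Y k) (Z k)"
    and lim: "X \<longlonglongrightarrow> x" "Y \<longlonglongrightarrow> y" "Z \<longlonglongrightarrow> z"
  shows "dependent3 x y z"
proof -
  define lc where "lc w X Y Z = fst w *s X + fst (snd w) *s Y + snd (snd w) *s Z"
    for w :: "complex \<times> complex \<times> complex" and X Y Z :: "complex^'k"
  have "\<exists>w. w \<in> sphere 0 1 \<and> lc w (X k) (Y k) (Z k) = 0" for k
  proof -
    obtain a b c where abc: "(a, b, c) \<noteq> (0, 0, 0)" "a *s X k + b *s Y k + c *s Z k = 0"
      using dep[of k] unfolding dependent3_def by blast
    have "lc (sgn (a, b, c)) (X k) (Y k) (Z k)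
        = complex_of_real (inverse (norm (a, b, c))) *s (a *s X k + b *s Y k + c *s Z k)"
      by (simp add: lc_def sgn_div_norm vec_eq_iff scaleR_conv_of_real divide_inverse algebra_simps)
    moreover have "(a, b, c) \<noteq> 0" using abc(1) by (simp add: zero_prod_def)
    ultimately show ?thesis using abc(2) by (intro exI[of _ "sgn (a, b, c)"]) (simp add: norm_sgn)
  qed
  then obtain w where w: "\<And>k. w k \<in> sphere 0 1" "\<And>k. lc (w k) (X k) (Y k) (Z k) = 0"
    by metis
  have "seq_compact (sphere (0::complex \<times> complex \<times> complex) 1)"
    by (rule compact_imp_seq_compact) simp
  then obtain l r where l: "l \<in> sphere 0 1" "strict_mono r" "(w \<circ> r) \<longlonglongrightarrow> l"
    using w(1) unfolding seq_compact_def by blast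
  have "(\<lambda>k. lc ((w \<circ> r) k) ((X \<circ> r) k) ((Y \<circ> r) k) ((Z \<circ> r) k)) \<longlonglongrightarrow> lc l x y z"
    unfolding lc_def using l(3) lim[THEN LIMSEQ_subseq_LIMSEQ, OF l(2)]
    by (intro tendsto_add tendsto_vec_scale tendsto_fst tendsto_snd)
  then have "lc l x y z = 0" using w(2) by (simp add: LIMSEQ_const_iff)
  moreover have "(fst l, fst (snd l), snd (snd l)) \<noteq> (0, 0, 0)" using l(1) by (cases l) auto
  ultimately show ?thesis unfolding dependent3_def lc_def by blast
qed

lemma dependent3_obtain_basis:
  fixes A B C :: "complex^'m"
  assumes dep: "dependent3 A B C"
    and nonvanishing: "\<And>s t. (s, t) \<noteq> (0, 0) \<Longrightarrow> s^2 *s A + (s * t) *s B + t^2 *s C \<noteq> 0"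
  obtains e1 e2 a1 a2 b1 b2 c1 c2 where "indep2 e1 e2"
    "A = a1 *s e1 + a2 *s e2" "B = b1 *s e1 + b2 *s e2" "C = c1 *s e1 + c2 *s e2"
proof -
  have A: "A \<noteq> 0" using nonvanishing[of 1 0] by simp
  show ?thesis
  proof (cases "indep2 A B")
    case True
    obtain a b c where abc: "(a, b, c) \<noteq> (0, 0, 0)" "a *s A + b *s B + c *s C = 0"
      using dep unfolding dependent3_def by blast
    have "c \<noteq> 0" using abc indep2_lincomb_eq_0_iff[OF True, of a b] by auto
    moreover have "c * C $ i = - (a * A $ i + b * B $ i)" for i
      using abc(2) by (simp add: vec_eq_iff eq_neg_iff_add_eq_0 algebra_simps)
    ultimately have "C = (- a / c) *s A + (- b / c) *s B"
      by (simp add: vec_eq_iff field_simps)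
    then show ?thesis using True by (intro that[of A B 1 0 0 1 "- a / c" "- b / c"]) simp_all
  next
    case False
    then obtain \<beta> where B: "B = \<beta> *s A" using A by (auto simp: indep2_iff_not_multiple)
    show ?thesis
    proof (cases "indep2 A C")
      case True
      then show ?thesis using B by (intro that[of A C 1 0 \<beta> 0 0 1]) simp_all
    next
      case False
      then obtain \<gamma> where C: "C = \<gamma> *s A" using A by (auto simp: indep2_iff_not_multiple)
      obtain s t where st: "(s, t) \<noteq> (0, 0)" "bin_quad 1 \<beta> \<gamma> s t = 0" by (rule bin_quad_has_zero)
      have "s^2 *s A + (s * t) *s B + t^2 *s C = bin_quad 1 \<beta> \<gamma> s t *s A"
        unfolding B C by (simp add: vec_eq_iff algebra_simps)
      then show ?thesis using nonvanishing[OF st(1)] unfolding st(2) by simp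
    qed
  qed
qed

section \<open>The map \<open>\<Phi>\<close> and its fibres\<close>

lemma Phi_on_pair:
  assumes "\<And>i. hom_poly 2 (q i)"
  shows "Phi q (s *s u + t *s v)
    = s^2 *s Phi q u + (s * t) *s (Phi q (u + v) - Phi q u - Phi q v) + t^2 *s Phi q v"
  by (simp add: vec_eq_iff Phi_def hom_poly_2_on_pair[OF assms] algebra_simps)

lemma Phi_nonzero: "x \<noteq> 0 \<Longrightarrow> x \<notin> base_locus q \<Longrightarrow> Phi q x \<noteq> 0"
  by (auto simp: base_locus_def Phi_def vec_eq_iff)

lemma tendsto_Phi:
  assumes "\<And>i. hom_poly 2 (q i)" and "a \<longlonglongrightarrow> u"
  shows "(\<lambda>k. Phi q (a k)) \<longlonglongrightarrow> Phi q u"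
  unfolding Phi_def
proof (rule tendsto_vec_lambda)
  show "((\<lambda>k. q i (a k)) \<longlongrightarrow> q i u) sequentially" for i
    by (rule isCont_tendsto_compose[OF hom_poly_isCont[OF assms(1)] assms(2)])
qed

lemma zariski_closure_subset: "S \<subseteq> zariski_closure S"
  unfolding zariski_closure_def by blast

lemma zariski_closure_minimal: "zariski_closed Z \<Longrightarrow> S \<subseteq> Z \<Longrightarrow> zariski_closure S \<subseteq> Z"
  unfolding zariski_closure_def by blast

lemma mem_fibreI:
  "Q \<noteq> 0 \<Longrightarrow> Q \<notin> base_locus q \<Longrightarrow> vec.span {Phi q Q} = vec.span {Phi q P} \<Longrightarrow> Q \<in> fibre q P"
  unfolding fibre_def by (rule subsetD[OF zariski_closure_subset]) simp

definition proportional_locus :: "('m::finite \<Rightarrow> complex^'n \<Rightarrow> complex) \<Rightarrow> complex^'n \<Rightarrow> (complex^'n) set" where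
  "proportional_locus q P = {x. x \<noteq> 0 \<and> (\<forall>i j. q i x * q j P = q j x * q i P)}"

lemma zariski_closed_proportional_locus:
  assumes quadrics: "\<And>i. hom_poly 2 (q i)"
  shows "zariski_closed (proportional_locus q P)"
proof -
  define f where "f i j x = q j P * q i x + (- q i P) * q j x" for i j x
  have hom: "hom_poly 2 (f i j)" for i j
    unfolding f_def by (rule hom_poly_lincomb[OF quadrics quadrics])
  have f_eq_0_iff: "f i j x = 0 \<longleftrightarrow> q i x * q j P = q j x * q i P" for i j x
  proof -
    have "f i j x = q i x * q j P - q j x * q i P" unfolding f_def by (simp add: algebra_simps)
    then show ?thesis by (simp only: right_minus_eq)
  qed
  have "\<forall>g\<in>range (case_prod f). \<exists>d. hom_poly d g"
  proof
    fix g assume "g \<in> range (case_prod f)"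
    then obtain i j where "g = f i j" by auto
    then show "\<exists>d. hom_poly d g" using hom by blast
  qed
  moreover have "proportional_locus q P = {x. x \<noteq> 0 \<and> (\<forall>g\<in>range (case_prod f). g x = 0)}"
  proof -
    have "(\<forall>g\<in>range (case_prod f). g x = 0) \<longleftrightarrow> (\<forall>i j. f i j x = 0)" for x by auto
    then show ?thesis unfolding proportional_locus_def f_eq_0_iff by simp
  qed
  ultimately show ?thesis unfolding zariski_closed_def by blast
qed

lemma fibre_subset_proportional_locus:
  assumes "\<And>i. hom_poly 2 (q i)"
  shows "fibre q P \<subseteq> proportional_locus q P"
  unfolding fibre_def
proof (rule zariski_closure_minimal[OF zariski_closed_proportional_locus[OF assms]], rule subsetI)
  fix Q assume "Q \<in> {Q. Q \<noteq> 0 \<and> Q \<notin> base_locus q \<and> vec.span {Phi q Q} = vec.span {Phi q P}}"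
  then have Q: "Q \<noteq> 0" and "vec.span {Phi q Q} = vec.span {Phi q P}" by auto
  then obtain c where "Phi q Q = c *s Phi q P" unfolding span_singleton_eq_iff by blast
  then show "Q \<in> proportional_locus q P"
    using Q by (simp add: proportional_locus_def vec_eq_iff Phi_def)
qed

lemma proportional_locus_Phi_multiple:
  assumes "Phi q P \<noteq> 0" "x \<in> proportional_locus q P"
  obtains c where "Phi q x = c *s Phi q P"
proof -
  obtain j where j: "q j P \<noteq> 0" using assms(1) by (auto simp: vec_eq_iff Phi_def)
  define c where "c = q j x / q j P"
  have "q i x = c * q i P" for i
  proof -
    have eq: "q i x * q j P = q j x * q i P" using assms(2) unfolding proportional_locus_def by blast
    have "q i x = q i x * q j P / q j P" using j by simp
    also have "\<dots> = q j x * q i P / q j P" by (simp only: eq)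
    finally show ?thesis unfolding c_def by simp
  qed
  then have "Phi q x = c *s Phi q P" by (simp add: vec_eq_iff Phi_def)
  then show ?thesis by (rule that)
qed

text \<open>On a secant \<open>\<langle>p, p'\<rangle>\<close> of the fibre the values of \<open>\<Phi>\<close> lie in the plane spanned by
  \<open>\<Phi>(P)\<close> and \<open>\<Phi>(p + p') - \<Phi>(p) - \<Phi>(p')\<close>.\<close>
lemma Phi_dependent_on_fibre_secant:
  assumes quadrics: "\<And>i. hom_poly 2 (q i)" and P: "P \<noteq> 0" "P \<notin> base_locus q"
    and p: "p \<in> fibre q P" "p' \<in> fibre q P"
    and ab: "a \<in> vec.span {p, p'}" "b \<in> vec.span {p, p'}"
  shows "dependent3 (Phi q a) (Phi q b) (Phi q (a + b))"
proof -
  have "p \<in> proportional_locus q P" "p' \<in> proportional_locus q P"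
    using p fibre_subset_proportional_locus[of q, OF quadrics] by blast+
  then obtain c c' where c: "Phi q p = c *s Phi q P" and c': "Phi q p' = c' *s Phi q P"
    by (metis proportional_locus_Phi_multiple[OF Phi_nonzero[OF P]])
  define B where "B = Phi q (p + p') - Phi q p - Phi q p'"
  have in_plane: "\<exists>\<alpha> \<beta>. Phi q x = \<alpha> *s Phi q P + \<beta> *s B" if x: "x \<in> vec.span {p, p'}" for x
  proof -
    obtain s t where x: "x = s *s p + t *s p'" using x unfolding span_pair_eq by blast
    have "Phi q x = (s^2 * c + t^2 * c') *s Phi q P + (s * t) *s B"
      unfolding x Phi_on_pair[OF quadrics] c c' B_def by (simp add: vec_eq_iff algebra_simps)
    then show ?thesis by blast
  qed
  have "a + b \<in> vec.span {p, p'}" using ab by (simp add: vec.span_add)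
  then obtain z1 z2 where "Phi q (a + b) = z1 *s Phi q P + z2 *s B" using in_plane by blast
  moreover obtain x1 x2 where "Phi q a = x1 *s Phi q P + x2 *s B" using in_plane ab(1) by blast
  moreover obtain y1 y2 where "Phi q b = y1 *s Phi q P + y2 *s B" using in_plane ab(2) by blast
  ultimately show ?thesis by (intro dependent3_in_span_pair)
qed

lemma secant_line_fibre_Phi_dependent:
  assumes quadrics: "\<And>i. hom_poly 2 (q i)" and P: "P \<noteq> 0" "P \<notin> base_locus q"
    and sec: "secant_line (fibre q P) L"
  obtains u v where "L = vec.span {u, v}" "indep2 u v" "dependent3 (Phi q u) (Phi q v) (Phi q (u + v))"
proof -
  obtain u v p p' a b where L: "L = vec.span {u, v}" "vec.dim L = 2"
    and secants: "\<And>k. p k \<in> fibre q P \<and> p' k \<in> fibre q P \<and> vec.dim (vec.span {p k, p' k}) = 2 \<and>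
         a k \<in> vec.span {p k, p' k} \<and> b k \<in> vec.span {p k, p' k}"
    and lim: "a \<longlonglongrightarrow> u" "b \<longlonglongrightarrow> v"
    using sec unfolding secant_line_def by blast
  have "dependent3 (Phi q (a k)) (Phi q (b k)) (Phi q (a k + b k))" for k
    using secants[of k] by (intro Phi_dependent_on_fibre_secant[OF quadrics P, of "p k" "p' k"]) blast+
  then have dep: "dependent3 (Phi q u) (Phi q v) (Phi q (u + v))"
    by (rule dependent3_limit[of "\<lambda>k. Phi q (a k)" "\<lambda>k. Phi q (b k)" "\<lambda>k. Phi q (a k + b k)"])
      (intro tendsto_Phi[OF quadrics] lim tendsto_add)+
  have "indep2 u v" using L by (simp add: indep2_iff_dim_span)
  from L(1) this dep show ?thesis by (rule that)
qed

section \<open>\<open>\<Phi>\<close> on a line\<close>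

context
  fixes q :: "'m::finite \<Rightarrow> complex^'n::finite \<Rightarrow> complex" and L :: "(complex^'n) set"
    and u v :: "complex^'n" and e1 e2 :: "complex^'m" and a1 b1 c1 a2 b2 c2 :: complex
  assumes uv: "indep2 u v" and L: "L = vec.span {u, v}" and disj: "L \<inter> base_locus q = {}"
    and e: "indep2 e1 e2"
    and Phi_coords: "\<And>s t. Phi q (s *s u + t *s v) = bin_quad a1 b1 c1 s t *s e1 + bin_quad a2 b2 c2 s t *s e2"
begin

lemma pair_point_mem_line: "(s, t) \<noteq> (0, 0) \<Longrightarrow> s *s u + t *s v \<in> L \<and> s *s u + t *s v \<noteq> 0"
  unfolding L span_pair_eq using indep2_lincomb_eq_0_iff[OF uv] by blast

lemma Phi_coords_nonzero:
  assumes "(s, t) \<noteq> (0, 0)"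
  shows "(bin_quad a1 b1 c1 s t, bin_quad a2 b2 c2 s t) \<noteq> (0, 0)"
proof -
  have "s *s u + t *s v \<notin> base_locus q" using pair_point_mem_line[OF assms] disj by blast
  then have "Phi q (s *s u + t *s v) \<noteq> 0" using pair_point_mem_line[OF assms] by (simp add: Phi_nonzero)
  then show ?thesis unfolding Phi_coords indep2_lincomb_eq_0_iff[OF e] .
qed

lemma Phi_line_point_eq_iff:
  assumes st: "(s, t) \<noteq> (0, 0)" and \<alpha>\<beta>: "(\<alpha>, \<beta>) \<noteq> (0, 0)"
  shows "vec.span {Phi q (s *s u + t *s v)} = vec.span {\<alpha> *s e1 + \<beta> *s e2} \<longleftrightarrow>
    bin_quad (\<beta> * a1 - \<alpha> * a2) (\<beta> * b1 - \<alpha> * b2) (\<beta> * c1 - \<alpha> * c2) s t = 0"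
proof -
  have "bin_quad (\<beta> * a1 - \<alpha> * a2) (\<beta> * b1 - \<alpha> * b2) (\<beta> * c1 - \<alpha> * c2) s t
      = \<beta> * bin_quad a1 b1 c1 s t - \<alpha> * bin_quad a2 b2 c2 s t"
    by (simp add: algebra_simps)
  then show ?thesis unfolding Phi_coords indep2_span_singleton_eq_iff[OF e Phi_coords_nonzero[OF st] \<alpha>\<beta>]
    by (simp only: right_minus_eq)
qed

lemma Phi_line_fibre_eq_quad_zeros:
  assumes \<alpha>\<beta>: "(\<alpha>, \<beta>) \<noteq> (0, 0)"
  shows "{vec.span {x} | x. x \<in> L \<and> x \<noteq> 0 \<and> vec.span {Phi q x} = vec.span {\<alpha> *s e1 + \<beta> *s e2}}
    = quad_zeros u v (\<beta> * a1 - \<alpha> * a2) (\<beta> * b1 - \<alpha> * b2) (\<beta> * c1 - \<alpha> * c2)"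
    (is "?fib = ?zeros")
proof (intro equalityI subsetI)
  fix Z assume "Z \<in> ?fib"
  then obtain x where Z: "Z = vec.span {x}" "x \<in> L" "x \<noteq> 0" "vec.span {Phi q x} = vec.span {\<alpha> *s e1 + \<beta> *s e2}"
    by blast
  obtain s t where x: "x = s *s u + t *s v" and st: "(s, t) \<noteq> (0, 0)"
    using Z(2,3) unfolding L by (rule span_pair_nonzero_cases)
  have "bin_quad (\<beta> * a1 - \<alpha> * a2) (\<beta> * b1 - \<alpha> * b2) (\<beta> * c1 - \<alpha> * c2) s t = 0"
    using Z(4) unfolding x Phi_line_point_eq_iff[OF st \<alpha>\<beta>] .
  then show "Z \<in> ?zeros" unfolding Z(1) x by (rule quad_zerosI[OF st])
next
  fix Z assume "Z \<in> ?zeros"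
  then obtain s t where Z: "Z = vec.span {s *s u + t *s v}" and st: "(s, t) \<noteq> (0, 0)"
    and zero: "bin_quad (\<beta> * a1 - \<alpha> * a2) (\<beta> * b1 - \<alpha> * b2) (\<beta> * c1 - \<alpha> * c2) s t = 0"
    unfolding quad_zeros_def by blast
  have "vec.span {Phi q (s *s u + t *s v)} = vec.span {\<alpha> *s e1 + \<beta> *s e2}"
    unfolding Phi_line_point_eq_iff[OF st \<alpha>\<beta>] by (rule zero)
  then show "Z \<in> ?fib" unfolding Z using pair_point_mem_line[OF st] by blast
qed

lemma Phi_line_image_eq:
  "{vec.span {Phi q x} | x. x \<in> L \<and> x \<noteq> 0} = {vec.span {y} | y. y \<in> vec.span {e1, e2} \<and> y \<noteq> 0}"
    (is "?img = ?line")
proof (intro equalityI subsetI)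
  fix Y assume "Y \<in> ?img"
  then obtain x where Y: "Y = vec.span {Phi q x}" "x \<in> L" "x \<noteq> 0" by blast
  obtain s t where x: "x = s *s u + t *s v" and st: "(s, t) \<noteq> (0, 0)"
    using Y(2,3) unfolding L by (rule span_pair_nonzero_cases)
  have "Phi q x \<in> vec.span {e1, e2}" unfolding x Phi_coords span_pair_eq by blast
  moreover have "Phi q x \<noteq> 0"
    using Phi_coords_nonzero[OF st] unfolding x Phi_coords indep2_lincomb_eq_0_iff[OF e] .
  ultimately show "Y \<in> ?line" unfolding Y(1) by blast
next
  fix Y assume "Y \<in> ?line"
  then obtain y where Y: "Y = vec.span {y}" "y \<in> vec.span {e1, e2}" "y \<noteq> 0" by blast
  obtain \<alpha> \<beta> where y: "y = \<alpha> *s e1 + \<beta> *s e2" and \<alpha>\<beta>: "(\<alpha>, \<beta>) \<noteq> (0, 0)"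
    using Y(2,3) by (rule span_pair_nonzero_cases)
  obtain s t where st: "(s, t) \<noteq> (0, 0)"
    and zero: "bin_quad (\<beta> * a1 - \<alpha> * a2) (\<beta> * b1 - \<alpha> * b2) (\<beta> * c1 - \<alpha> * c2) s t = 0"
    by (rule bin_quad_has_zero)
  have "vec.span {Phi q (s *s u + t *s v)} = Y"
    unfolding Y(1) y Phi_line_point_eq_iff[OF st \<alpha>\<beta>] by (rule zero)
  then show "Y \<in> ?img" using pair_point_mem_line[OF st] by blast
qed

text \<open>A point \<open>[\<alpha> : \<beta>]\<close> of the image line has two preimages unless the form with coefficients
  \<open>\<beta> (a1, b1, c1) - \<alpha> (a2, b2, c2)\<close> has a double root, i.e. unless \<open>[\<alpha> : \<beta>]\<close> is a zero of
  its discriminant, which does not vanish identically.\<close>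
lemma double_cover_of_line_if_quadratic_coords: "double_cover_of_line q L"
proof -
  let ?img = "{vec.span {Phi q x} | x. x \<in> L \<and> x \<noteq> 0}"
  let ?fib = "\<lambda>Y. {vec.span {x} | x. x \<in> L \<and> x \<noteq> 0 \<and> vec.span {Phi q x} = Y}"
  define D0 D1 D2 where "D0 = b2^2 - 4 * a2 * c2" and "D1 = 4 * (a1 * c2 + a2 * c1) - 2 * b1 * b2"
    and "D2 = b1^2 - 4 * a1 * c1"
  have D: "(D0, D1, D2) \<noteq> (0, 0, 0)"
    unfolding D0_def D1_def D2_def by (rule pencil_discriminant_nonzero) (use Phi_coords_nonzero in auto)
  have "{Y \<in> ?img. card (?fib Y) \<noteq> 2} \<subseteq> quad_zeros e1 e2 D0 D1 D2"
  proof
    fix Y assume Y: "Y \<in> {Y \<in> ?img. card (?fib Y) \<noteq> 2}"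
    then obtain y where y: "Y = vec.span {y}" "y \<in> vec.span {e1, e2}" "y \<noteq> 0"
      unfolding Phi_line_image_eq by blast
    obtain \<alpha> \<beta> where \<alpha>\<beta>: "y = \<alpha> *s e1 + \<beta> *s e2" "(\<alpha>, \<beta>) \<noteq> (0, 0)"
      using y(2,3) by (rule span_pair_nonzero_cases)
    have "card (?fib (vec.span {\<alpha> *s e1 + \<beta> *s e2})) \<noteq> 2" using Y unfolding y(1) \<alpha>\<beta>(1) by simp
    then have "card (quad_zeros u v (\<beta> * a1 - \<alpha> * a2) (\<beta> * b1 - \<alpha> * b2) (\<beta> * c1 - \<alpha> * c2)) \<noteq> 2"
      unfolding Phi_line_fibre_eq_quad_zeros[OF \<alpha>\<beta>(2)] .
    then have "(\<beta> * b1 - \<alpha> * b2)^2 - 4 * (\<beta> * a1 - \<alpha> * a2) * (\<beta> * c1 - \<alpha> * c2) = 0"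
      using card_quad_zeros[OF uv] by blast
    then have "bin_quad D0 D1 D2 \<alpha> \<beta> = 0"
      unfolding pencil_discriminant D0_def D1_def D2_def .
    then show "Y \<in> quad_zeros e1 e2 D0 D1 D2" unfolding y(1) \<alpha>\<beta>(1) by (rule quad_zerosI[OF \<alpha>\<beta>(2)])
  qed
  then have fin: "finite {Y \<in> ?img. card (?fib Y) \<noteq> 2}"
    by (rule finite_subset) (rule finite_quad_zeros[OF e D])
  show ?thesis unfolding double_cover_of_line_def Let_def
  proof (intro conjI exI)
    show "proj_line (vec.span {e1, e2})" using e by (simp add: proj_line_def indep2_iff_dim_span)
    show "?img = {vec.span {y} | y. y \<in> vec.span {e1, e2} \<and> y \<noteq> 0}" by (rule Phi_line_image_eq)
  qed (rule fin)
qed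

end

lemma double_cover_if_Phi_dependent:
  fixes q :: "'m::finite \<Rightarrow> complex^'n::finite \<Rightarrow> complex"
  assumes quadrics: "\<And>i. hom_poly 2 (q i)" and uv: "indep2 u v" and L: "L = vec.span {u, v}"
    and disj: "L \<inter> base_locus q = {}" and dep: "dependent3 (Phi q u) (Phi q v) (Phi q (u + v))"
  shows "double_cover_of_line q L"
proof -
  define A B C where "A = Phi q u" and "B = Phi q (u + v) - Phi q u - Phi q v" and "C = Phi q v"
  have Phi_uv: "Phi q (s *s u + t *s v) = s^2 *s A + (s * t) *s B + t^2 *s C" for s t
    unfolding A_def B_def C_def by (rule Phi_on_pair[OF quadrics])
  have "dependent3 A B C"
  proof -
    obtain a b c where abc: "(a, b, c) \<noteq> (0, 0, 0)" "a *s Phi q u + b *s Phi q v + c *s Phi q (u + v) = 0"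
      using dep unfolding dependent3_def by blast
    have "(a + c) *s A + c *s B + (b + c) *s C = a *s Phi q u + b *s Phi q v + c *s Phi q (u + v)"
      unfolding A_def B_def C_def by (simp add: vec_eq_iff algebra_simps)
    moreover have "(a + c, c, b + c) \<noteq> (0, 0, 0)" using abc(1) by auto
    ultimately show ?thesis unfolding dependent3_def using abc(2) by metis
  qed
  moreover have "s^2 *s A + (s * t) *s B + t^2 *s C \<noteq> 0" if st: "(s, t) \<noteq> (0, 0)" for s t
  proof -
    have "s *s u + t *s v \<noteq> 0" using st indep2_lincomb_eq_0_iff[OF uv] by simp
    moreover have "s *s u + t *s v \<notin> base_locus q"
      using disj unfolding L span_pair_eq by blast
    ultimately show ?thesis unfolding Phi_uv[symmetric] by (rule Phi_nonzero)
  qed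
  ultimately obtain e1 e2 a1 a2 b1 b2 c1 c2 where e: "indep2 e1 e2"
    and ABC: "A = a1 *s e1 + a2 *s e2" "B = b1 *s e1 + b2 *s e2" "C = c1 *s e1 + c2 *s e2"
    by (rule dependent3_obtain_basis)
  have "Phi q (s *s u + t *s v) = bin_quad a1 b1 c1 s t *s e1 + bin_quad a2 b2 c2 s t *s e2" for s t
    unfolding Phi_uv ABC by (simp add: vec_eq_iff algebra_simps)
  then show ?thesis by (rule double_cover_of_line_if_quadratic_coords[OF uv L disj e])
qed

lemma proj_line_obtain_basis:
  assumes "proj_line W"
  obtains w1 w2 where "indep2 w1 w2" "W = vec.span {w1, w2}"
proof -
  have W: "vec.subspace W" "vec.dim W = 2" using assms unfolding proj_line_def by auto
  obtain B where B: "B \<subseteq> W" "vec.independent B" "W \<subseteq> vec.span B" "card B = vec.dim W"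
    using vec.basis_exists by blast
  then obtain w1 w2 where w: "B = {w1, w2}" using W(2) card_2_iff by metis
  have "vec.dim (vec.span {w1, w2}) = 2"
    using vec.dim_span_eq_card_independent[OF B(2)] B(4) W(2) w by simp
  moreover have "vec.span {w1, w2} \<subseteq> W" using B(1) W(1) w by (intro vec.span_minimal) auto
  then have "W = vec.span {w1, w2}" using B(3) w by blast
  ultimately show ?thesis using that indep2_iff_dim_span by blast
qed

lemma infinite_proj_line_points:
  fixes w1 w2 :: "'a::field_char_0^'k"
  assumes "indep2 w1 w2"
  shows "infinite {vec.span {y} | y. y \<in> vec.span {w1, w2} \<and> y \<noteq> 0}"
proof -
  define f where "f n = vec.span {1 *s w1 + of_nat n *s w2}" for n :: nat
  have "inj f"
  proof (rule injI)
    fix n m assume "f n = f m"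
    then show "n = m"
      using indep2_span_singleton_eq_iff[OF assms, of 1 "of_nat n" 1 "of_nat m"] unfolding f_def by simp
  qed
  moreover have "range f \<subseteq> {vec.span {y} | y. y \<in> vec.span {w1, w2} \<and> y \<noteq> 0}"
  proof
    fix Y assume "Y \<in> range f"
    then obtain n where Y: "Y = vec.span {1 *s w1 + of_nat n *s w2}" unfolding f_def by blast
    have "1 *s w1 + of_nat n *s w2 \<in> vec.span {w1, w2}" unfolding span_pair_eq by blast
    moreover have "1 *s w1 + of_nat n *s w2 \<noteq> 0"
      unfolding indep2_lincomb_eq_0_iff[OF assms] by simp
    ultimately show "Y \<in> {vec.span {y} | y. y \<in> vec.span {w1, w2} \<and> y \<noteq> 0}" unfolding Y by blast
  qed
  ultimately show ?thesis using infinite_super range_inj_infinite by blast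
qed

lemma secant_line_through_points:
  assumes "p \<in> F" "p' \<in> F" "indep2 p p'"
  shows "secant_line F (vec.span {p, p'})"
  unfolding secant_line_def
proof (intro exI conjI allI)
  show "vec.dim (vec.span {p, p'}) = 2" using assms(3) by (simp add: indep2_iff_dim_span)
  show "(\<lambda>k. p) \<longlonglongrightarrow> p" "(\<lambda>k. p') \<longlonglongrightarrow> p'" by simp_all
qed (use assms in \<open>auto simp: indep2_iff_dim_span intro: vec.span_base\<close>)

lemma Phi_point_eq_on_fibre:
  assumes quadrics: "\<And>i. hom_poly 2 (q i)" and P: "P \<noteq> 0" "P \<notin> base_locus q"
    and x: "x \<in> fibre q P" "x \<notin> base_locus q"
  shows "vec.span {Phi q x} = vec.span {Phi q P}"
proof -
  have "x \<in> proportional_locus q P" using x(1) fibre_subset_proportional_locus[of q, OF quadrics] by blast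
  then obtain c where c: "Phi q x = c *s Phi q P"
    by (rule proportional_locus_Phi_multiple[OF Phi_nonzero[OF P]])
  have "x \<noteq> 0" using \<open>x \<in> proportional_locus q P\<close> unfolding proportional_locus_def by blast
  then have "c \<noteq> 0" using Phi_nonzero[OF _ x(2)] c by auto
  then show ?thesis unfolding span_singleton_eq_iff using c by blast
qed

lemma proj_line_eq_span:
  assumes line: "proj_line L" and "x \<in> L" "y \<in> L" "indep2 x y"
  shows "L = vec.span {x, y}"
proof (rule vec.subspace_dim_equal[symmetric])
  show "vec.subspace L" using line unfolding proj_line_def by simp
  show "vec.span {x, y} \<subseteq> L" using assms \<open>vec.subspace L\<close> by (intro vec.span_minimal) auto
  show "vec.dim L \<le> vec.dim (vec.span {x, y})"
    using assms unfolding proj_line_def indep2_iff_dim_span by simp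
qed simp

lemma double_cover_of_line_image_infinite:
  assumes "double_cover_of_line q L"
  shows "infinite {vec.span {Phi q x} | x. x \<in> L \<and> x \<noteq> 0}"
proof -
  obtain W where W: "proj_line W" "{vec.span {Phi q x} | x. x \<in> L \<and> x \<noteq> 0} = {vec.span {y} | y. y \<in> W \<and> y \<noteq> 0}"
    using assms unfolding double_cover_of_line_def Let_def by blast
  obtain w1 w2 where "indep2 w1 w2" "W = vec.span {w1, w2}" by (rule proj_line_obtain_basis[OF W(1)])
  then show ?thesis unfolding W(2) by (simp add: infinite_proj_line_points)
qed

lemma double_cover_of_line_obtain_two_preimages:
  assumes dc: "double_cover_of_line q L"
  obtains x1 x2 where "x1 \<in> L" "x2 \<in> L" "x1 \<noteq> 0" "x2 \<noteq> 0" "vec.span {x1} \<noteq> vec.span {x2}"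
    "vec.span {Phi q x1} = vec.span {Phi q x2}"
proof -
  let ?img = "{vec.span {Phi q x} | x. x \<in> L \<and> x \<noteq> 0}"
  let ?fib = "\<lambda>Y. {vec.span {x} | x. x \<in> L \<and> x \<noteq> 0 \<and> vec.span {Phi q x} = Y}"
  have "finite {Y \<in> ?img. card (?fib Y) \<noteq> 2}"
    using dc unfolding double_cover_of_line_def Let_def by simp
  then have "\<not> ?img \<subseteq> {Y \<in> ?img. card (?fib Y) \<noteq> 2}"
    using double_cover_of_line_image_infinite[OF dc] finite_subset by blast
  then obtain Y where "card (?fib Y) = 2" by blast
  then obtain S1 S2 where S: "?fib Y = {S1, S2}" "S1 \<noteq> S2" unfolding card_2_iff by blast
  then have "S1 \<in> ?fib Y" "S2 \<in> ?fib Y" by simp_all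
  then obtain x1 x2 where "S1 = vec.span {x1}" "x1 \<in> L" "x1 \<noteq> 0" "vec.span {Phi q x1} = Y"
    and "S2 = vec.span {x2}" "x2 \<in> L" "x2 \<noteq> 0" "vec.span {Phi q x2} = Y"
    by blast
  with S(2) show ?thesis using that by blast
qed

lemma secant_to_nonlinear_fibre_if_double_cover:
  fixes q :: "'m::finite \<Rightarrow> complex^'n::finite \<Rightarrow> complex"
  assumes quadrics: "\<And>i. hom_poly 2 (q i)" and line: "proj_line L"
    and disj: "L \<inter> base_locus q = {}" and dc: "double_cover_of_line q L"
  obtains P where "P \<noteq> 0" "P \<notin> base_locus q" "\<not> linear_cone (fibre q P)" "secant_line (fibre q P) L"
proof -
  obtain x1 x2 where x: "x1 \<in> L" "x2 \<in> L" "x1 \<noteq> 0" "x2 \<noteq> 0" "vec.span {x1} \<noteq> vec.span {x2}"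
    "vec.span {Phi q x1} = vec.span {Phi q x2}"
    by (rule double_cover_of_line_obtain_two_preimages[OF dc])
  have x': "x1 \<notin> base_locus q" "x2 \<notin> base_locus q" using x(1,2) disj by blast+
  have indep: "indep2 x1 x2" by (rule indep2_if_span_singleton_neq[OF x(3-5)])
  have L_eq: "L = vec.span {x1, x2}" by (rule proj_line_eq_span[OF line x(1,2) indep])
  have fibre: "x1 \<in> fibre q x1" "x2 \<in> fibre q x1"
    using x x' by (auto intro: mem_fibreI)
  have "\<not> linear_cone (fibre q x1)"
  proof
    assume "linear_cone (fibre q x1)"
    then have "L \<subseteq> insert 0 (fibre q x1)"
      unfolding L_eq linear_cone_def using fibre by (intro vec.span_minimal) auto
    then have "{vec.span {Phi q x} | x. x \<in> L \<and> x \<noteq> 0} \<subseteq> {vec.span {Phi q x1}}"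
      using Phi_point_eq_on_fibre[OF quadrics x(3) x'(1)] disj by blast
    then have "finite {vec.span {Phi q x} | x. x \<in> L \<and> x \<noteq> 0}" by (rule finite_subset) simp
    then show False using double_cover_of_line_image_infinite[OF dc] by blast
  qed
  moreover have "secant_line (fibre q x1) L"
    unfolding L_eq by (rule secant_line_through_points[OF fibre indep])
  ultimately show ?thesis using that x(3) x'(1) by blast
qed

theorem lemma4p2:
  fixes q :: "'m::finite \<Rightarrow> complex^'n::finite \<Rightarrow> complex"
    and L :: "(complex^'n) set"
  assumes quadrics: "\<And>i. hom_poly 2 (q i)"
    and indep: "\<And>c. (\<forall>x. (\<Sum>i\<in>UNIV. c i * q i x) = 0) \<Longrightarrow> (\<forall>i. c i = 0)"
    and line: "proj_line L"
    and disj: "L \<inter> base_locus q = {}"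
  shows "double_cover_of_line q L \<longleftrightarrow>
    (\<exists>P. P \<noteq> 0 \<and> P \<notin> base_locus q \<and> \<not> linear_cone (fibre q P) \<and>
         secant_line (fibre q P) L)"
proof
  assume "double_cover_of_line q L"
  then obtain P where "P \<noteq> 0" "P \<notin> base_locus q" "\<not> linear_cone (fibre q P)" "secant_line (fibre q P) L"
    by (rule secant_to_nonlinear_fibre_if_double_cover[OF quadrics line disj])
  then show "\<exists>P. P \<noteq> 0 \<and> P \<notin> base_locus q \<and> \<not> linear_cone (fibre q P) \<and> secant_line (fibre q P) L"
    by blast
next
  assume "\<exists>P. P \<noteq> 0 \<and> P \<notin> base_locus q \<and> \<not> linear_cone (fibre q P) \<and> secant_line (fibre q P) L"
  then obtain P where "P \<noteq> 0" "P \<notin> base_locus q" "secant_line (fibre q P) L" by blast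
  then obtain u v where "L = vec.span {u, v}" "indep2 u v" "dependent3 (Phi q u) (Phi q v) (Phi q (u + v))"
    by (rule secant_line_fibre_Phi_dependent[OF quadrics])
  then show "double_cover_of_line q L"
    using double_cover_if_Phi_dependent[OF quadrics _ _ disj] by blast
qed

end
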